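(* For every network $\mathcal N$ and every integer $T\ge1$, $\mathcal R^{\mathcal N}\subseteq\mathcal R^{(\mathcal M_T,\mathcal E_T)}$.
   Context: A network is a triple $\mathcal N=(\mathcal L,\mathcal I,D_{\mathcal L})$ where $\mathcal L$ is a finite nonempty set of links, each $\mathcal I(l)$ is a collection of nonempty subsets of $\mathcal L$, and $D_{\mathcal L}$ assigns an integer $D_{\mathcal L}(l,l')$ to every pair with $l'\in\phi$ for some $\phi\in\mathcal I(l)$. A schedule is a map $S:\mathcal L\times\mathbb Z\to\{0,1\}$; $S(l,t)$ has a collision if there is $\phi\in\mathcal I(l)$ with $S(l',t+D_{\mathcal L}(l,l'))=1$ for all $l'\in\phi$; $S$ is collision free if no $(l,t)$ with $S(l,t)=1$ has a collision. $R_S(l)=\lim_{T\to\infty}\frac1T\sum_{t=0}^{T-1}\iota\big(S(l,t)=1\text{ and collision free}\big)$ when it exists; $R_S=(R_S(l))_l$ is the rate vector. A nonnegative vector $R\in[0,\infty)^{\mathcal L}$ is achievable if for every $\epsilon>0$ some schedule $S$ has a rate vector with $R_S(l)\ge R(l)-\epsilon$ for all $l$; $\mathcal R^{\mathcal N}$ is the set of achievable nonnegative vectors. $S[T,k]$ is the $|\mathcal L|\times T$ binary matrix with $S[T,k](l,j)=S(l,kT+j)$. The scheduling graph $(\mathcal M_T,\mathcal E_T)$ has vertex set $\mathcal M_T$ = all $|\mathcal L|\times T$ binary matrices $A$ with $A=S[T,0]$ for some collision-free schedule $S$, and edge set $\mathcal E_T$ = all pairs $(A,B)$ with $A=S[T,0]$,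 $B=S[T,1]$ for some collision-free schedule $S$. A cycle is a sequence $(A_0,\dots,A_k)$, $k\ge1$, with $(A_i,A_{i+1})\in\mathcal E_T$ for all $i$, $A_k=A_0$, and $A_0,\dots,A_{k-1}$ pairwise distinct; its rate vector is $R_C=\frac{1}{kT}\sum_{i=0}^{k-1}A_i\mathbf 1$ ($\mathbf 1$ the all-ones vector of length $T$). $\mathcal R^{(\mathcal M_T,\mathcal E_T)}$ is the convex hull of the rate vectors of all cycles of $(\mathcal M_T,\mathcal E_T)$. *)

theory Defs
  imports "HOL-Analysis.Analysis"
begin

(* A network: links are the elements of a finite type 'l (finite, nonempty),
   I :: 'l => 'l set set is the interference collection, D :: 'l => 'l => int the delays
   (values of D outside the relevant pairs are irrelevant). *)

definition network :: "('l::finite \<Rightarrow> 'l set set) \<Rightarrow> ('l \<Rightarrow> 'l \<Rightarrow> int) \<Rightarrow> bool" where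
  "network I D \<longleftrightarrow> (\<forall>l. \<forall>\<phi>\<in>I l. \<phi> \<noteq> {})"

type_synonym 'l schedule = "'l \<Rightarrow> int \<Rightarrow> bool"   (* S(l,t) = 1  iff  S l t *)

definition collision :: "('l \<Rightarrow> 'l set set) \<Rightarrow> ('l \<Rightarrow> 'l \<Rightarrow> int) \<Rightarrow> 'l schedule \<Rightarrow> 'l \<Rightarrow> int \<Rightarrow> bool" where
  "collision I D S l t \<longleftrightarrow> (\<exists>\<phi>\<in>I l. \<forall>l'\<in>\<phi>. S l' (t + D l l'))"

definition collision_free :: "('l \<Rightarrow> 'l set set) \<Rightarrow> ('l \<Rightarrow> 'l \<Rightarrow> int) \<Rightarrow> 'l schedule \<Rightarrow> bool" where
  "collision_free I D S \<longleftrightarrow> (\<forall>l t. S l t \<longrightarrow> \<not> collision I D S l t)"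

definition avg_success :: "('l \<Rightarrow> 'l set set) \<Rightarrow> ('l \<Rightarrow> 'l \<Rightarrow> int) \<Rightarrow> 'l schedule \<Rightarrow> 'l \<Rightarrow> nat \<Rightarrow> real" where
  "avg_success I D S l T = (1 / real T) *
     (\<Sum>t<T. if S l (int t) \<and> \<not> collision I D S l (int t) then 1 else 0)"

definition has_rate_vector :: "('l::finite \<Rightarrow> 'l set set) \<Rightarrow> ('l \<Rightarrow> 'l \<Rightarrow> int) \<Rightarrow> 'l schedule \<Rightarrow> real^'l \<Rightarrow> bool" where
  "has_rate_vector I D S r \<longleftrightarrow> (\<forall>l. avg_success I D S l \<longlonglongrightarrow> r $ l)"

definition achievable :: "('l::finite \<Rightarrow> 'l set set) \<Rightarrow> ('l \<Rightarrow> 'l \<Rightarrow> int) \<Rightarrow> real^'l \<Rightarrow> bool" where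
  "achievable I D R \<longleftrightarrow> (\<forall>\<epsilon>>0. \<exists>S r. has_rate_vector I D S r \<and> (\<forall>l. r $ l \<ge> R $ l - \<epsilon>))"

definition rate_region :: "('l::finite \<Rightarrow> 'l set set) \<Rightarrow> ('l \<Rightarrow> 'l \<Rightarrow> int) \<Rightarrow> (real^'l) set" where
  "rate_region I D = {R. (\<forall>l. R $ l \<ge> 0) \<and> achievable I D R}"

(* |L| x T binary matrices, represented as 'l => nat => bool, with all entries at column
   indices j >= T fixed to False (so that equality of matrices is meaningful) *)
type_synonym 'l bmat = "'l \<Rightarrow> nat \<Rightarrow> bool"

definition block :: "'l schedule \<Rightarrow> nat \<Rightarrow> int \<Rightarrow> 'l bmat" where
  "block S T k = (\<lambda>l j. j < T \<and> S l (k * int T + int j))"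

definition sched_vertices :: "('l \<Rightarrow> 'l set set) \<Rightarrow> ('l \<Rightarrow> 'l \<Rightarrow> int) \<Rightarrow> nat \<Rightarrow> 'l bmat set" where
  "sched_vertices I D T = {block S T 0 | S. collision_free I D S}"

definition sched_edges :: "('l \<Rightarrow> 'l set set) \<Rightarrow> ('l \<Rightarrow> 'l \<Rightarrow> int) \<Rightarrow> nat \<Rightarrow> ('l bmat \<times> 'l bmat) set" where
  "sched_edges I D T = {(block S T 0, block S T 1) | S. collision_free I D S}"

definition is_cycle :: "('l \<Rightarrow> 'l set set) \<Rightarrow> ('l \<Rightarrow> 'l \<Rightarrow> int) \<Rightarrow> nat \<Rightarrow> (nat \<Rightarrow> 'l bmat) \<Rightarrow> nat \<Rightarrow> bool" where
  "is_cycle I D T A k \<longleftrightarrow> k \<ge> 1 \<and> (\<forall>i<k. (A i, A (Suc i)) \<in> sched_edges I D T)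
      \<and> A k = A 0 \<and> inj_on A {..<k}"

definition cycle_rate :: "nat \<Rightarrow> (nat \<Rightarrow> 'l::finite bmat) \<Rightarrow> nat \<Rightarrow> real^'l" where
  "cycle_rate T A k = (\<chi> l. (1 / (real k * real T)) * (\<Sum>i<k. \<Sum>j<T. if A i l j then 1 else 0))"

definition graph_rate_region :: "('l::finite \<Rightarrow> 'l set set) \<Rightarrow> ('l \<Rightarrow> 'l \<Rightarrow> int) \<Rightarrow> nat \<Rightarrow> (real^'l) set" where
  "graph_rate_region I D T = convex hull {cycle_rate T A k | A k. is_cycle I D T A k}"

end

theory Submission
  imports Defs
begin

(*
  A collision-free schedule S yields a walk S[T,0], S[T,1], ... in the scheduling graph. Cutting
  out a closed subwalk between two visits of the same vertex splits a closed walk into two shorter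
  ones, so every closed walk has its mean rate in the convex hull of the cycle rates, and every walk
  of length n consists of closed walks plus at most |M_T| leftover steps. Hence the average rate of
  S over the first n blocks is within |M_T|/n of the hull, which is closed because there are only
  finitely many cycles; so R_S lies in the hull. An arbitrary schedule has the same rates as its
  collision-free subschedule of successful transmissions. Finally, silencing a link maps cycles to
  closed walks, which makes the hull downward closed in the nonnegative orthant; this and closedness
  absorb the epsilon in the definition of achievability.
*)

section \<open>Mean weights of walks in a graph\<close>

definition walk :: "('v \<times> 'v) set \<Rightarrow> (nat \<Rightarrow> 'v) \<Rightarrow> nat \<Rightarrow> bool" where
  "walk E A k \<longleftrightarrow> (\<forall>i<k. (A i, A (Suc i)) \<in> E)"

definition simple_cycle :: "('v \<times> 'v) set \<Rightarrow> (nat \<Rightarrow> 'v) \<Rightarrow> nat \<Rightarrow> bool" where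
  "simple_cycle E A k \<longleftrightarrow> 1 \<le> k \<and> walk E A k \<and> A k = A 0 \<and> inj_on A {..<k}"

definition mean_weight :: "('v \<Rightarrow> 'a::real_vector) \<Rightarrow> (nat \<Rightarrow> 'v) \<Rightarrow> nat \<Rightarrow> 'a" where
  "mean_weight w A k = (1 / real k) *\<^sub>R (\<Sum>i<k. w (A i))"

definition cycle_means :: "('v \<times> 'v) set \<Rightarrow> ('v \<Rightarrow> 'a::real_vector) \<Rightarrow> 'a set" where
  "cycle_means E w = {mean_weight w A k | A k. simple_cycle E A k}"

lemma scaleR_mean_weight: "0 < k \<Longrightarrow> real k *\<^sub>R mean_weight w A k = (\<Sum>i<k. w (A i))"
  by (simp add: mean_weight_def)

lemma mean_weight_in_convex:
  assumes "convex C" "0 < k" "\<And>i. i < k \<Longrightarrow> w (A i) \<in> C"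
  shows "mean_weight w A k \<in> C"
proof -
  have "(\<Sum>i<k. (1 / real k) *\<^sub>R w (A i)) \<in> C"
    using assms by (intro convex_sum) auto
  then show ?thesis by (simp add: mean_weight_def scaleR_sum_right)
qed

lemma not_inj_on_lessThanE:
  fixes A :: "nat \<Rightarrow> 'a"
  assumes "\<not> inj_on A {..<k}"
  obtains i j where "i < j" "j < k" "A i = A j"
proof -
  obtain x y where "x < k" "y < k" "x \<noteq> y" "A x = A y"
    using assms unfolding inj_on_def by auto
  then show thesis
  proof (cases "x < y")
    case False
    with \<open>x \<noteq> y\<close> have "y < x" by simp
    with \<open>x < k\<close> \<open>A x = A y\<close> show thesis by (intro that[of y x]) auto
  qed (auto intro: that)
qed

(* A \<circ> skip_index i a is the walk A with its closed subwalk from position i to i + a cut out. *)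

definition skip_index :: "nat \<Rightarrow> nat \<Rightarrow> nat \<Rightarrow> nat" where
  "skip_index i a n = (if n < i then n else n + a)"

lemma sum_skip_index:
  fixes f :: "nat \<Rightarrow> 'a::comm_monoid_add"
  assumes "i + a \<le> k"
  shows "(\<Sum>n<k. f n) = (\<Sum>n<a. f (i + n)) + (\<Sum>n<k - a. f (skip_index i a n))"
proof -
  have "(\<Sum>n<k - a. f (skip_index i a n))
      = (\<Sum>n\<in>{0..<i}. f (skip_index i a n)) + (\<Sum>n\<in>{i..<k - a}. f (skip_index i a n))"
    using assms by (simp add: lessThan_atLeast0 sum.atLeastLessThan_concat)
  also have "\<dots> = (\<Sum>n\<in>{0..<i}. f n) + (\<Sum>n\<in>{i + a..<k}. f n)"
    using assms sum.shift_bounds_nat_ivl[of f i a "k - a"]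
    by (simp add: skip_index_def add.commute)
  finally have rest: "(\<Sum>n<k - a. f (skip_index i a n)) = (\<Sum>n\<in>{0..<i}. f n) + (\<Sum>n\<in>{i + a..<k}. f n)" .
  have loop: "(\<Sum>n<a. f (i + n)) = (\<Sum>n\<in>{i..<i + a}. f n)"
    using sum.shift_bounds_nat_ivl[of f 0 i a] by (simp add: lessThan_atLeast0 add.commute)
  have "(\<Sum>n<k. f n) = (\<Sum>n\<in>{0..<i}. f n) + (\<Sum>n\<in>{i..<i + a}. f n) + (\<Sum>n\<in>{i + a..<k}. f n)"
    using assms by (simp add: lessThan_atLeast0 sum.atLeastLessThan_concat)
  then show ?thesis
    unfolding rest loop by (simp add: algebra_simps)
qed

lemma walk_subwalk:
  assumes "walk E A k" "i + a \<le> k"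
  shows "walk E (\<lambda>n. A (i + n)) a"
  using assms by (auto simp: walk_def)

lemma walk_skip_loop:
  assumes "walk E A k" "i + a \<le> k" "A (i + a) = A i"
  shows "walk E (A \<circ> skip_index i a) (k - a)"
  unfolding walk_def
proof (intro allI impI)
  fix n assume n: "n < k - a"
  consider "Suc n < i" | "Suc n = i" | "i \<le> n" by linarith
  then show "((A \<circ> skip_index i a) n, (A \<circ> skip_index i a) (Suc n)) \<in> E"
  proof cases
    case 3
    then show ?thesis using assms n by (auto simp: walk_def skip_index_def)
  qed (use assms n in \<open>auto simp: walk_def skip_index_def\<close>)
qed

lemma mean_weight_split:
  assumes "0 < a" "a < k"
    and "(\<Sum>n<k. w (A n)) = (\<Sum>n<a. w (B n)) + (\<Sum>n<k - a. w (C n))"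
  shows "mean_weight w A k
    = (real a / real k) *\<^sub>R mean_weight w B a + (real (k - a) / real k) *\<^sub>R mean_weight w C (k - a)"
proof -
  have "real a / real k * (1 / real a) = 1 / real k"
    "real (k - a) / real k * (1 / real (k - a)) = 1 / real k"
    using assms by (simp_all add: field_simps)
  then show ?thesis
    unfolding mean_weight_def assms(3) scaleR_scaleR scaleR_add_right by simp
qed

lemma closed_walk_mean_in_cycle_hull:
  assumes "walk E A k" "0 < k" "A k = A 0"
  shows "mean_weight w A k \<in> convex hull (cycle_means E w)"
  using assms
proof (induction k arbitrary: A rule: less_induct)
  case (less k A)
  show ?case
  proof (cases "inj_on A {..<k}")
    case True
    with less.prems have "simple_cycle E A k"
      by (simp add: simple_cycle_def)
    then show ?thesis
      unfolding cycle_means_def by (intro hull_inc) blast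
  next
    case False
    then obtain i j where ij: "i < j" "j < k" "A i = A j"
      by (rule not_inj_on_lessThanE)
    define a where "a = j - i"
    have ia: "i + a \<le> k" "A (i + a) = A i" "0 < a" "a < k"
      using ij by (auto simp: a_def)
    have "mean_weight w (\<lambda>n. A (i + n)) a \<in> convex hull (cycle_means E w)"
      using less.IH[of a "\<lambda>n. A (i + n)"] walk_subwalk[OF less.prems(1) ia(1)] ia by simp
    moreover have "(A \<circ> skip_index i a) (k - a) = (A \<circ> skip_index i a) 0"
      using less.prems(3) ia by (auto simp: skip_index_def)
    then have "mean_weight w (A \<circ> skip_index i a) (k - a) \<in> convex hull (cycle_means E w)"
      using less.IH[OF _ walk_skip_loop[OF less.prems(1) ia(1,2)]] ia by (simp add: comp_def)
    moreover have "mean_weight w A k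
      = (real a / real k) *\<^sub>R mean_weight w (\<lambda>n. A (i + n)) a
        + (real (k - a) / real k) *\<^sub>R mean_weight w (A \<circ> skip_index i a) (k - a)"
      using ia by (intro mean_weight_split) (simp_all add: sum_skip_index)
    ultimately show ?thesis
      using ia by (auto intro!: convexD[OF convex_convex_hull] simp: diff_divide_distrib)
  qed
qed

lemma walk_decomposition:
  assumes "walk E A k" "finite V" "\<And>i. i < k \<Longrightarrow> A i \<in> V"
  shows "\<exists>m h B. m \<le> k \<and> k - m \<le> card V \<and> (m = 0 \<or> h \<in> convex hull (cycle_means E w))
           \<and> (\<Sum>i<k. w (A i)) = real m *\<^sub>R h + (\<Sum>i<k - m. w (B i))"
  using assms
proof (induction k arbitrary: A rule: less_induct)
  case (less k A)
  show ?case
  proof (cases "inj_on A {..<k}")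
    case True
    then have "card {..<k} \<le> card V"
      using less.prems by (intro card_inj_on_le) auto
    then show ?thesis
      by (intro exI[of _ 0] exI[of _ A]) auto
  next
    case False
    then obtain i j where ij: "i < j" "j < k" "A i = A j"
      by (rule not_inj_on_lessThanE)
    define a where "a = j - i"
    have ia: "i + a \<le> k" "A (i + a) = A i" "0 < a" "a < k"
      using ij by (auto simp: a_def)
    define h1 where "h1 = mean_weight w (\<lambda>n. A (i + n)) a"
    have h1: "h1 \<in> convex hull (cycle_means E w)"
      unfolding h1_def using walk_subwalk[OF less.prems(1) ia(1)] ia
      by (intro closed_walk_mean_in_cycle_hull) simp_all
    have "k - a < k" "\<And>n. n < k - a \<Longrightarrow> (A \<circ> skip_index i a) n \<in> V"
      using less.prems(3) ia by (simp_all add: skip_index_def)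
    then obtain m' h' B where IH: "m' \<le> k - a" "k - a - m' \<le> card V"
      "m' = 0 \<or> h' \<in> convex hull (cycle_means E w)"
      "(\<Sum>n<k - a. w ((A \<circ> skip_index i a) n)) = real m' *\<^sub>R h' + (\<Sum>n<k - a - m'. w (B n))"
      using less.IH[OF _ walk_skip_loop[OF less.prems(1) ia(1,2)] less.prems(2)] by blast
    define m where "m = a + m'"
    define h where "h = (if m' = 0 then h1 else (real a / real m) *\<^sub>R h1 + (real m' / real m) *\<^sub>R h')"
    have h: "h \<in> convex hull (cycle_means E w)"
      using h1 IH(3) unfolding h_def m_def
      by (auto intro!: convexD[OF convex_convex_hull] simp: add_divide_distrib[symmetric])
    have mh: "real m *\<^sub>R h = real a *\<^sub>R h1 + real m' *\<^sub>R h'"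
      using ia(3) by (auto simp: h_def m_def scaleR_add_right)
    have "(\<Sum>n<k. w (A n)) = real a *\<^sub>R h1 + (\<Sum>n<k - a. w ((A \<circ> skip_index i a) n))"
      using sum_skip_index[OF ia(1), of "w \<circ> A"] ia(3) by (simp add: h1_def scaleR_mean_weight)
    also have "\<dots> = real m *\<^sub>R h + (\<Sum>n<k - m. w (B n))"
      unfolding IH(4) mh by (simp add: m_def add.assoc)
    finally show ?thesis
      using IH(1,2) h ia unfolding m_def by (intro exI[of _ "a + m'"] exI[of _ h] exI[of _ B]) auto
  qed
qed

lemma finite_cycle_means:
  assumes "finite (Domain E)"
  shows "finite (cycle_means E w)"
proof -
  let ?V = "Domain E"
  have "cycle_means E w \<subseteq> (\<lambda>(k, A). mean_weight w A k) ` (SIGMA k:{..card ?V}. {..<k} \<rightarrow>\<^sub>E ?V)"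
  proof
    fix x assume "x \<in> cycle_means E w"
    then obtain A k where x: "x = mean_weight w A k" and cyc: "simple_cycle E A k"
      unfolding cycle_means_def by blast
    have vert: "A ` {..<k} \<subseteq> ?V"
      using cyc by (auto simp: simple_cycle_def walk_def)
    have "card {..<k} \<le> card ?V"
      using cyc vert assms by (intro card_inj_on_le) (auto simp: simple_cycle_def)
    moreover have "x = mean_weight w (restrict A {..<k}) k"
      unfolding x mean_weight_def by simp
    ultimately show "x \<in> (\<lambda>(k, A). mean_weight w A k) ` (SIGMA k:{..card ?V}. {..<k} \<rightarrow>\<^sub>E ?V)"
      using vert by (intro image_eqI[of _ _ "(k, restrict A {..<k})"]) auto
  qed
  moreover have "finite (SIGMA k:{..card ?V}. {..<k} \<rightarrow>\<^sub>E ?V)"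
    using assms by (intro finite_SigmaI finite_PiE) auto
  ultimately show ?thesis
    by (rule finite_subset[OF _ finite_imageI])
qed

lemma convex_shrink_coordinate:
  fixes C :: "(real^'n) set"
  assumes "convex C" and zero: "\<And>x l. x \<in> C \<Longrightarrow> (\<chi> m. if m = l then 0 else x$m) \<in> C"
    and x: "x \<in> C" and c: "0 \<le> c" "c \<le> x$l"
  shows "(\<chi> m. if m = l then c else x$m) \<in> C"
proof (cases "x$l = 0")
  case True
  with c have "c = 0" by simp
  with zero[OF x, of l] show ?thesis by (simp only:)
next
  case False
  with c have "0 < x$l" by simp
  define t where "t = c / x$l"
  have t: "0 \<le> t" "t \<le> 1"
    using c \<open>0 < x$l\<close> by (auto simp: t_def)
  have "t *\<^sub>R x + (1 - t) *\<^sub>R (\<chi> m. if m = l then 0 else x$m) \<in> C"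
    using assms t by (intro convexD) auto
  moreover have "t *\<^sub>R x + (1 - t) *\<^sub>R (\<chi> m. if m = l then 0 else x$m) = (\<chi> m. if m = l then c else x$m)"
    using \<open>0 < x$l\<close> by (auto simp: t_def vec_eq_iff algebra_simps)
  ultimately show ?thesis by simp
qed

lemma convex_downward_closed:
  fixes C :: "(real^'n) set"
  assumes "convex C" and zero: "\<And>x l. x \<in> C \<Longrightarrow> (\<chi> m. if m = l then 0 else x$m) \<in> C"
    and "x \<in> C" "\<And>l. 0 \<le> y$l" "\<And>l. y$l \<le> x$l"
  shows "y \<in> C"
proof -
  have "y \<in> C" if "x \<in> C" "\<forall>l. y$l \<le> x$l" "\<forall>l. l \<notin> K \<longrightarrow> y$l = x$l" for x and K :: "'n set"
    using finite[of K] that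
  proof (induction K arbitrary: x)
    case empty
    then have "y = x" by (simp add: vec_eq_iff)
    with empty.prems show ?case by simp
  next
    case (insert l K)
    define x' where "x' = (\<chi> m. if m = l then y$l else x$m)"
    have "x' \<in> C"
      unfolding x'_def using insert.prems(1,2) assms(4)
      by (intro convex_shrink_coordinate[OF assms(1) zero]) auto
    moreover have "\<forall>m. y$m \<le> x'$m" "\<forall>m. m \<notin> K \<longrightarrow> y$m = x'$m"
      using insert.prems(2,3) by (auto simp: x'_def)
    ultimately show ?case by (rule insert.IH)
  qed
  then show ?thesis using assms(3,5) by blast
qed

section \<open>The scheduling graph\<close>

definition block_rate :: "nat \<Rightarrow> 'l::finite bmat \<Rightarrow> real^'l" where
  "block_rate T B = (\<chi> l. (\<Sum>j<T. if B l j then 1 else 0) / real T)"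

lemma cycle_rate_eq_mean_weight: "cycle_rate T A k = mean_weight (block_rate T) A k"
  by (simp add: cycle_rate_def mean_weight_def block_rate_def vec_eq_iff
      sum_divide_distrib[symmetric])

lemma graph_rate_region_eq_cycle_hull:
  "graph_rate_region I D T = convex hull (cycle_means (sched_edges I D T) (block_rate T))"
proof -
  have "is_cycle I D T A k = simple_cycle (sched_edges I D T) A k" for A k
    by (auto simp: is_cycle_def simple_cycle_def walk_def)
  then show ?thesis
    by (simp add: graph_rate_region_def cycle_means_def cycle_rate_eq_mean_weight)
qed

lemma block_rate_in_unit_box: "block_rate T B \<in> cbox 0 1"
proof -
  have "(\<Sum>j<T. if B l j then 1 else 0) \<le> (\<Sum>j<T. 1::real)" for l
    by (intro sum_mono) simp
  then show ?thesis
    by (auto simp: mem_box_cart block_rate_def sum_nonneg divide_le_eq_1)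
qed

lemma graph_rate_region_subset_unit_box: "graph_rate_region I D T \<subseteq> cbox 0 1"
  unfolding graph_rate_region_eq_cycle_hull cycle_means_def
  by (intro hull_minimal) (auto simp: simple_cycle_def intro!: mean_weight_in_convex block_rate_in_unit_box)

lemma finite_sched_vertices:
  fixes I :: "'l::finite \<Rightarrow> 'l set set"
  shows "finite (sched_vertices I D T)"
proof -
  have "sched_vertices I D T \<subseteq> (\<lambda>P l j. (l, j) \<in> P) ` Pow (UNIV \<times> {..<T})"
  proof
    fix A assume "A \<in> sched_vertices I D T"
    then have "A = (\<lambda>l j. (l, j) \<in> {(l, j). A l j})" "{(l, j). A l j} \<subseteq> UNIV \<times> {..<T}"
      by (auto simp: sched_vertices_def block_def)
    then show "A \<in> (\<lambda>P l j. (l, j) \<in> P) ` Pow (UNIV \<times> {..<T})" by blast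
  qed
  then show ?thesis by (rule finite_subset) auto
qed

lemma Domain_sched_edges: "Domain (sched_edges I D T) \<subseteq> sched_vertices I D T"
  by (auto simp: sched_edges_def sched_vertices_def)

lemma closed_graph_rate_region: "closed (graph_rate_region I D T)"
  unfolding graph_rate_region_eq_cycle_hull
  using finite_subset[OF Domain_sched_edges finite_sched_vertices]
  by (intro compact_imp_closed compact_convex_hull finite_imp_compact finite_cycle_means)

lemma collision_mono:
  assumes "\<And>l t. S' l t \<Longrightarrow> S l t" "collision I D S' l t"
  shows "collision I D S l t"
  using assms unfolding collision_def by blast

lemma collision_free_subschedule:
  assumes "collision_free I D S" "\<And>l t. S' l t \<Longrightarrow> S l t"
  shows "collision_free I D S'"
  using assms collision_mono unfolding collision_free_def by metis

definition silence_link :: "'l \<Rightarrow> 'l bmat \<Rightarrow> 'l bmat" where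
  "silence_link l B = (\<lambda>m j. m \<noteq> l \<and> B m j)"

lemma sched_edge_silence_link:
  assumes "(A, B) \<in> sched_edges I D T"
  shows "(silence_link l A, silence_link l B) \<in> sched_edges I D T"
proof -
  obtain S where S: "A = block S T 0" "B = block S T 1" "collision_free I D S"
    using assms unfolding sched_edges_def by auto
  define S' where "S' = (\<lambda>m t. m \<noteq> l \<and> S m t)"
  have "collision_free I D S'"
    using S(3) by (rule collision_free_subschedule) (simp add: S'_def)
  moreover have "block S' T k = silence_link l (block S T k)" for k
    by (auto simp: block_def silence_link_def S'_def)
  ultimately show ?thesis
    unfolding sched_edges_def S(1,2) by (intro CollectI exI[of _ S']) simp
qed

lemma graph_rate_region_zero_coordinate:
  fixes I :: "'l::finite \<Rightarrow> 'l set set"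
  assumes "x \<in> graph_rate_region I D T"
  shows "(\<chi> m. if m = l then 0 else x$m) \<in> graph_rate_region I D T"
proof -
  define Z where "Z = (\<lambda>x::real^'l. \<chi> m. if m = l then 0 else x$m)"
  have "linear Z"
    by (rule linearI) (auto simp: Z_def vec_eq_iff)
  let ?C = "cycle_means (sched_edges I D T) (block_rate T)"
  have "Z ` ?C \<subseteq> graph_rate_region I D T"
  proof
    fix z assume "z \<in> Z ` ?C"
    then obtain A k where z: "z = Z (mean_weight (block_rate T) A k)"
      and cyc: "simple_cycle (sched_edges I D T) A k"
      unfolding cycle_means_def by blast
    have "z = mean_weight (block_rate T) (silence_link l \<circ> A) k"
      by (simp add: z Z_def mean_weight_def block_rate_def silence_link_def vec_eq_iff)
    also have "\<dots> \<in> graph_rate_region I D T"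
      using cyc unfolding graph_rate_region_eq_cycle_hull
      by (intro closed_walk_mean_in_cycle_hull) (auto simp: simple_cycle_def walk_def sched_edge_silence_link)
    finally show "z \<in> graph_rate_region I D T" .
  qed
  then have "convex hull (Z ` ?C) \<subseteq> graph_rate_region I D T"
    unfolding graph_rate_region_eq_cycle_hull by (intro hull_minimal) simp_all
  moreover have "Z x \<in> convex hull (Z ` ?C)"
    using in_convex_hull_linear_image[OF \<open>linear Z\<close>] assms
    unfolding graph_rate_region_eq_cycle_hull by simp
  ultimately show ?thesis
    unfolding Z_def by blast
qed

lemma graph_rate_region_downward_closed:
  fixes I :: "'l::finite \<Rightarrow> 'l set set"
  assumes "x \<in> graph_rate_region I D T" "\<And>l. 0 \<le> y$l" "\<And>l. y$l \<le> x$l"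
  shows "y \<in> graph_rate_region I D T"
proof (rule convex_downward_closed[OF _ _ assms])
  show "convex (graph_rate_region I D T)"
    by (simp add: graph_rate_region_def)
qed (rule graph_rate_region_zero_coordinate)

section \<open>Rates of schedules\<close>

lemma sched_edge_consecutive_blocks:
  assumes "collision_free I D S"
  shows "(block S T i, block S T (i + 1)) \<in> sched_edges I D T"
proof -
  define S' where "S' = (\<lambda>l t. S l (t + i * int T))"
  have "collision I D S' l t = collision I D S l (t + i * int T)" for l t
    by (simp add: collision_def S'_def algebra_simps)
  then have "collision_free I D S'"
    using assms by (simp add: collision_free_def S'_def)
  moreover have "block S' T 0 = block S T i" "block S' T 1 = block S T (i + 1)"
    by (auto simp: block_def S'_def algebra_simps)
  ultimately show ?thesis
    unfolding sched_edges_def by (intro CollectI exI[of _ S']) simp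
qed

lemma sum_block_rate_eq_avg_success:
  assumes "collision_free I D S"
  shows "(\<Sum>i<n. block_rate T (block S T (int i))) $ l = real n * avg_success I D S l (n * T)"
proof -
  define g where "g = (\<lambda>t::nat. if S l (int t) then 1 else (0::real))"
  have "(\<Sum>j<T. if block S T (int i) l j then 1 else 0) = (\<Sum>t\<in>{i * T..<i * T + T}. g t)" for i
    using sum.shift_bounds_nat_ivl[of g 0 "i * T" T]
    by (simp add: block_def g_def lessThan_atLeast0 add.commute)
  then have "(\<Sum>i<n. block_rate T (block S T (int i))) $ l = (\<Sum>i<n. \<Sum>t\<in>{i * T..<i * T + T}. g t) / real T"
    by (simp add: block_rate_def flip: sum_divide_distrib)
  also have "\<dots> = (\<Sum>t<n * T. g t) / real T"
    by (simp only: sum.nat_group)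
  also have "\<dots> = real n * avg_success I D S l (n * T)"
  proof -
    have "(\<Sum>t<n * T. g t) = (\<Sum>t<n * T. if S l (int t) \<and> \<not> collision I D S l (int t) then 1 else 0)"
      using assms by (intro sum.cong) (auto simp: g_def collision_free_def)
    then show ?thesis by (simp add: avg_success_def)
  qed
  finally show ?thesis .
qed

lemma sum_block_rate_bounds:
  "0 \<le> (\<Sum>i<r. block_rate T (B i)) $ l" "(\<Sum>i<r. block_rate T (B i)) $ l \<le> real r"
proof -
  have "0 \<le> block_rate T (B i) $ l" "block_rate T (B i) $ l \<le> 1" for i
    using block_rate_in_unit_box[of T "B i"] by (auto simp: mem_box_cart)
  then show "0 \<le> (\<Sum>i<r. block_rate T (B i)) $ l" "(\<Sum>i<r. block_rate T (B i)) $ l \<le> real r"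
    using sum_bounded_above[of "{..<r}" "\<lambda>i. block_rate T (B i) $ l" 1]
    by (auto intro: sum_nonneg)
qed

lemma avg_success_near_graph_rate_region:
  fixes I :: "'l::finite \<Rightarrow> 'l set set"
  assumes cf: "collision_free I D S" and n: "card (sched_vertices I D T) < n"
  shows "\<exists>h \<in> graph_rate_region I D T.
           \<forall>l. \<bar>h$l - avg_success I D S l (n * T)\<bar> \<le> real (card (sched_vertices I D T)) / real n"
proof -
  let ?V = "sched_vertices I D T"
  have "walk (sched_edges I D T) (\<lambda>i. block S T (int i)) n"
    using sched_edge_consecutive_blocks[OF cf, of T] by (simp add: walk_def) (metis add.commute)
  moreover have "block S T (int i) \<in> ?V" for i
    using Domain_sched_edges sched_edge_consecutive_blocks[OF cf] by blast
  ultimately obtain m h B where mh: "m \<le> n" "n - m \<le> card ?V"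
    "m = 0 \<or> h \<in> graph_rate_region I D T"
    "(\<Sum>i<n. block_rate T (block S T (int i))) = real m *\<^sub>R h + (\<Sum>i<n - m. block_rate T (B i))"
    using walk_decomposition[OF _ finite_sched_vertices] unfolding graph_rate_region_eq_cycle_hull
    by blast
  with n have h: "h \<in> graph_rate_region I D T" by auto
  have "\<bar>h$l - avg_success I D S l (n * T)\<bar> \<le> real (card ?V) / real n" for l
  proof -
    let ?rest = "(\<Sum>i<n - m. block_rate T (B i)) $ l"
    have h01: "0 \<le> h$l" "h$l \<le> 1"
      using subsetD[OF graph_rate_region_subset_unit_box h] by (auto simp: mem_box_cart)
    then have "0 \<le> real (n - m) * h$l" "real (n - m) * h$l \<le> real (n - m)"
      by (simp_all add: mult_left_le)
    moreover have "0 \<le> ?rest" "?rest \<le> real (n - m)"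
      by (rule sum_block_rate_bounds)+
    moreover have "real n * (h$l - avg_success I D S l (n * T)) = real (n - m) * h$l - ?rest"
      using arg_cong[OF mh(4), of "\<lambda>x. x $ l"] sum_block_rate_eq_avg_success[OF cf] mh(1)
      by (simp add: algebra_simps)
    ultimately have "\<bar>real n * (h$l - avg_success I D S l (n * T))\<bar> \<le> real (n - m)"
      unfolding abs_le_iff by linarith
    then have "real n * \<bar>h$l - avg_success I D S l (n * T)\<bar> \<le> real (card ?V)"
      using mh(2) by (simp add: abs_mult)
    with n show ?thesis
      by (simp add: pos_le_divide_eq mult.commute)
  qed
  with h show ?thesis by blast
qed

lemma collision_free_rate_in_graph_rate_region:
  fixes I :: "'l::finite \<Rightarrow> 'l set set"
  assumes cf: "collision_free I D S" and r: "has_rate_vector I D S r" and T: "1 \<le> T"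
  shows "r \<in> graph_rate_region I D T"
proof -
  define N where "N = card (sched_vertices I D T)"
  obtain G where G: "\<And>n. N < n \<Longrightarrow> G n \<in> graph_rate_region I D T \<and>
      (\<forall>l. \<bar>G n $ l - avg_success I D S l (n * T)\<bar> \<le> real N / real n)"
    using avg_success_near_graph_rate_region[OF cf] unfolding N_def by metis
  have "(\<lambda>n. G n $ l) \<longlonglongrightarrow> r $ l" for l
  proof -
    have "strict_mono (\<lambda>n. n * T)"
      using T by (intro strict_monoI) simp
    then have "(\<lambda>n. avg_success I D S l (n * T)) \<longlonglongrightarrow> r $ l"
      using LIMSEQ_subseq_LIMSEQ[of "avg_success I D S l"] r
      by (simp add: has_rate_vector_def comp_def)
    moreover have "(\<lambda>n. G n $ l - avg_success I D S l (n * T)) \<longlonglongrightarrow> 0"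
    proof (rule Lim_null_comparison)
      show "\<forall>\<^sub>F n in sequentially. norm (G n $ l - avg_success I D S l (n * T)) \<le> real N / real n"
        using G by (intro eventually_sequentiallyI[of "Suc N"]) simp
    qed (rule lim_const_over_n)
    ultimately show ?thesis
      using tendsto_add by fastforce
  qed
  then have "G \<longlonglongrightarrow> r" by (rule vec_tendstoI)
  moreover have "\<forall>\<^sub>F n in sequentially. G n \<in> graph_rate_region I D T"
    using G by (intro eventually_sequentiallyI[of "Suc N"]) simp
  ultimately show ?thesis
    using closed_graph_rate_region by (intro Lim_in_closed_set) auto
qed

definition success_schedule :: "('l \<Rightarrow> 'l set set) \<Rightarrow> ('l \<Rightarrow> 'l \<Rightarrow> int) \<Rightarrow> 'l schedule \<Rightarrow> 'l schedule" where
  "success_schedule I D S l t \<longleftrightarrow> S l t \<and> \<not> collision I D S l t"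

lemma collision_success_schedule:
  "collision I D (success_schedule I D S) l t \<Longrightarrow> collision I D S l t"
  by (erule collision_mono[rotated]) (simp add: success_schedule_def)

lemma collision_free_success_schedule: "collision_free I D (success_schedule I D S)"
  unfolding collision_free_def by (meson collision_success_schedule success_schedule_def)

lemma avg_success_success_schedule: "avg_success I D (success_schedule I D S) = avg_success I D S"
proof -
  have "(success_schedule I D S l t \<and> \<not> collision I D (success_schedule I D S) l t)
      \<longleftrightarrow> (S l t \<and> \<not> collision I D S l t)" for l t
    by (meson collision_success_schedule success_schedule_def)
  then show ?thesis
    unfolding avg_success_def by simp
qed

lemma rate_vector_in_graph_rate_region:
  fixes I :: "'l::finite \<Rightarrow> 'l set set"
  assumes "has_rate_vector I D S r" "1 \<le> T"
  shows "r \<in> graph_rate_region I D T"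
  using assms collision_free_rate_in_graph_rate_region[OF collision_free_success_schedule]
  by (simp add: has_rate_vector_def avg_success_success_schedule)

theorem theorem6:
  fixes I :: "'l::finite \<Rightarrow> 'l set set" and D :: "'l \<Rightarrow> 'l \<Rightarrow> int" and T :: nat
  assumes "network I D" and "T \<ge> 1"
  shows "rate_region I D \<subseteq> graph_rate_region I D T"
proof
  fix R assume "R \<in> rate_region I D"
  then have R0: "\<And>l. 0 \<le> R $ l" and "achievable I D R"
    unfolding rate_region_def by auto
  have "\<exists>r \<in> graph_rate_region I D T. \<forall>l. R $ l - inverse (real (Suc n)) \<le> r $ l" for n
  proof -
    obtain S r where "has_rate_vector I D S r" "\<forall>l. R $ l - inverse (real (Suc n)) \<le> r $ l"
      using \<open>achievable I D R\<close> unfolding achievable_def by (meson inverse_positive_iff_positive of_nat_0_less_iff zero_less_Suc)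
    then show ?thesis
      using rate_vector_in_graph_rate_region[OF _ assms(2)] by blast
  qed
  then obtain r where r: "\<And>n. r n \<in> graph_rate_region I D T"
    and r_ge: "\<And>n l. R $ l - inverse (real (Suc n)) \<le> r n $ l"
    by metis
  define y where "y n = (\<chi> l. max 0 (R $ l - inverse (real (Suc n))))" for n
  have "y n \<in> graph_rate_region I D T" for n
    using subsetD[OF graph_rate_region_subset_unit_box r] r_ge
    by (intro graph_rate_region_downward_closed[OF r]) (auto simp: y_def mem_box_cart)
  moreover have "y \<longlonglongrightarrow> R"
  proof (rule vec_tendstoI)
    fix l
    have "(\<lambda>n. max 0 (R $ l - inverse (real (Suc n)))) \<longlonglongrightarrow> max 0 (R $ l - 0)"
      by (intro tendsto_intros LIMSEQ_inverse_real_of_nat)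
    then show "(\<lambda>n. y n $ l) \<longlonglongrightarrow> R $ l"
      using R0[of l] by (simp add: y_def)
  qed
  ultimately show "R \<in> graph_rate_region I D T"
    by (rule closed_sequentially[OF closed_graph_rate_region])
qed

end
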